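(* Let $\mathfrak L_1,\dots,\mathfrak L_n,\mathfrak L$ be complete lattices, let $(\mathcal F_\alpha)_{\alpha\in\mathcal O}$ with $\mathcal F_\alpha:\mathfrak L_1\times\dots\times\mathfrak L_n\to(\mathfrak L\to^+\mathfrak L)$ be a family that is $\limsup$-pushable in all arguments, and let $\phi:\mathcal O\to\mathcal O$ be monotone. Then for every nonzero limit ordinal $\lambda\in\mathcal O$ and all $\vec{\mathcal G}=(\mathcal G_1,\dots,\mathcal G_n)$ with $\mathcal G_i:\mathcal O\to\mathfrak L_i$, $$\limsup_{\alpha\to\lambda}\nu^{\phi(\alpha)}\big(\mathcal F_\alpha(\vec{\mathcal G}_\alpha)\big)\sqsubseteq\nu^{\liminf_\lambda\phi}\big(\mathcal F_\lambda(\limsup_\lambda\vec{\mathcal G})\big).$$ If moreover $\phi$ is affine, then even $$\limsup_{\alpha\to\lambda}\nu^{\phi(\alpha)}\big(\mathcal F_\alpha(\vec{\mathcal G}_\alpha)\big)\sqsubseteq\nu^{\phi(\lambda)}\big(\mathcal F_\lambda(\limsup_\lambda\vec{\mathcal G})\big).$$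
   Context: $\mathcal O$ is the set of ordinals $\le\top_{\mathsf{ord}}$ for a fixed ordinal $\top_{\mathsf{ord}}$ ($=\beth_\omega$). For $f:\mathcal O\to\mathfrak L$ into a complete lattice and a nonzero limit $\lambda$: $\liminf_\lambda f=\liminf_{\alpha\to\lambda}f(\alpha)=\sup_{\alpha_0<\lambda}\inf_{\alpha_0\le\alpha<\lambda}f(\alpha)$, $\limsup_\lambda f=\limsup_{\alpha\to\lambda}f(\alpha)=\inf_{\alpha_0<\lambda}\sup_{\alpha_0\le\alpha<\lambda}f(\alpha)$; on products of lattices, componentwise. $\mathfrak L\to^+\mathfrak L$ is the set of monotone maps. For $f:\mathfrak L\to\mathfrak L$, $g\in\mathfrak L$: $f^0(g)=g$, $f^{\alpha+1}(g)=f(f^\alpha(g))$, $f^\lambda(g)=\limsup_{\alpha\to\lambda}f^\alpha(g)$; $\nu^\alpha f:=f^\alpha(\top)$. A family $(\mathcal F_\alpha)_{\alpha\in\mathcal O}$ of maps $\mathfrak K\to\mathfrak K'$ is $\limsup$-pushable if for every $\mathcal G:\mathcal O\to\mathfrak K$ and nonzero limit $\lambda$: $\limsup_{\alpha\to\lambda}\mathcal F_\gamma(\mathcal G_\alpha)\sqsubseteq\mathcal F_\gamma(\limsup_{\alpha\to\lambda}\mathcal G_\alpha)$ for all $\gamma\in\mathcal O$, and $\limsup_{\alpha\to\lambda}\mathcal F_\alpha(\mathcal G_\alpha)\sqsubseteq\mathcal F_\lambda(\limsup_{\alpha\to\lambda}\mathcal G_\alpha)$. "$\limsup$-pushable in all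 arguments" means the family $(\vec{\mathcal G},\mathcal X)\mapsto\mathcal F_\alpha(\vec{\mathcal G})(\mathcal X)$ on $\mathfrak L_1\times\dots\times\mathfrak L_n\times\mathfrak L$ is $\limsup$-pushable. A function $\phi:\mathcal O\to\mathcal O$ is affine if $\phi(\alpha)=\min\{b\alpha+\beta,\top_{\mathsf{ord}}\}$ for some $b\in\{0,1\}$ and $\beta\in\mathcal O$. *)

theory Defs
  imports Main "HOL-Library.Product_Order"
begin

text \<open>The ordinal domain O = ordinals up to a top ordinal is modelled by an arbitrary
  type 'o that is well-ordered and a complete linear order (such a type is order-isomorphic
  to the ordinals \<le> some ordinal, namely its top element).\<close>

definition nonzero_limit :: "'o::{complete_linorder,wellorder} \<Rightarrow> bool" where
  "nonzero_limit l \<longleftrightarrow> bot < l \<and> (\<forall>b<l. \<exists>c. b < c \<and> c < l)"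

definition olimsup :: "('o::{complete_linorder,wellorder} \<Rightarrow> 'a::complete_lattice) \<Rightarrow> 'o \<Rightarrow> 'a" where
  "olimsup f l = (INF a0\<in>{..<l}. SUP a\<in>{a0..<l}. f a)"

definition oliminf :: "('o::{complete_linorder,wellorder} \<Rightarrow> 'a::complete_lattice) \<Rightarrow> 'o \<Rightarrow> 'a" where
  "oliminf f l = (SUP a0\<in>{..<l}. INF a\<in>{a0..<l}. f a)"

definition osuc :: "'o::{complete_linorder,wellorder} \<Rightarrow> 'o" where
  "osuc b = (if b = top then top else (LEAST c. b < c))"

text \<open>Transfinite iteration: f^0 g = g, f^(a+1) g = f (f^a g),
  f^l g = limsup_{a \<rightarrow> l} f^a g.  For a successor a, its predecessor is Sup {..<a}.\<close>
definition oiter :: "('a::complete_lattice \<Rightarrow> 'a) \<Rightarrow> 'a \<Rightarrow> 'o::{complete_linorder,wellorder} \<Rightarrow> 'a" where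
  "oiter f g = wfrec {(x, y). x < y}
     (\<lambda>rec a. if a = bot then g
              else if Sup {..<a} < a then f (rec (Sup {..<a}))
              else olimsup rec a)"

definition onu :: "'o::{complete_linorder,wellorder} \<Rightarrow> ('a::complete_lattice \<Rightarrow> 'a) \<Rightarrow> 'a" where
  "onu a f = oiter f top a"

text \<open>Ordinal addition a + b truncated at the top element, by recursion on b.\<close>
definition oadd :: "'o::{complete_linorder,wellorder} \<Rightarrow> 'o \<Rightarrow> 'o" where
  "oadd a = wfrec {(x, y). x < y}
     (\<lambda>rec b. if b = bot then a
              else if Sup {..<b} < b then osuc (rec (Sup {..<b}))
              else Sup (rec ` {..<b}))"

definition affine :: "('o::{complete_linorder,wellorder} \<Rightarrow> 'o) \<Rightarrow> bool" where
  "affine phi \<longleftrightarrow> (\<exists>b::nat. \<exists>beta. b \<in> {0,1} \<and>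
      phi = (\<lambda>a. if b = 0 then beta else oadd a beta))"

definition limsup_pushable :: "('o::{complete_linorder,wellorder} \<Rightarrow> 'k::complete_lattice \<Rightarrow> 'k2::complete_lattice) \<Rightarrow> bool" where
  "limsup_pushable F \<longleftrightarrow> (\<forall>G l. nonzero_limit l \<longrightarrow>
      (\<forall>c. olimsup (\<lambda>a. F c (G a)) l \<le> F c (olimsup G l)) \<and>
      olimsup (\<lambda>a. F a (G a)) l \<le> F l (olimsup G l))"

end

theory Submission
  imports Defs
begin

text \<open>
  Write \<open>x\<^sub>a(\<beta>)\<close> for the \<open>\<beta>\<close>-th approximant of the greatest fixpoint of
  \<open>F\<^sub>a(G\<^sub>a)\<close> and \<open>y(\<beta>)\<close> for that of \<open>F\<^sub>\<lambda>(limsup G)\<close>. By induction on \<open>\<beta>\<close>,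
  \<open>limsup\<^sub>a x\<^sub>a(\<beta>) \<le> y(\<beta>)\<close>: successor steps are exactly pushability, and limit
  steps work because approximants started at the top descend in \<open>\<beta>\<close>. Descent also
  shows that along a monotone \<open>\<phi>\<close> the tail of \<open>x\<^sub>a(\<phi> a)\<close> lies below every
  \<open>x\<^sub>a(\<phi> a\<^sub>0)\<close>, whence the bound \<open>y(sup\<^sub>a\<^sub><\<^sub>\<lambda> \<phi> a) = y(liminf \<phi>)\<close>.
  For \<open>\<phi> a = a + \<beta>\<close> the same induction is run on \<open>\<beta>\<close>, starting from the case
  \<open>\<phi> = id\<close>, where \<open>sup\<^sub>a\<^sub><\<^sub>\<lambda> a = \<lambda>\<close>; a constant \<open>\<phi>\<close> has \<open>liminf \<phi> = \<phi> \<lambda>\<close>.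
\<close>

section \<open>Limits superior along ordinals\<close>

lemma olimsup_cong:
  assumes "\<And>x. x < l \<Longrightarrow> f x = g x"
  shows "olimsup f l = olimsup g l"
  unfolding olimsup_def by (rule INF_cong[OF refl], rule SUP_cong[OF refl]) (auto intro: assms)

lemma INF_le_olimsup: "(INF a\<in>{..<l}. f a) \<le> olimsup f l"
  unfolding olimsup_def by (rule INF_mono) (auto intro!: SUP_upper2)

lemma olimsup_tail_mono:
  assumes "a0 < l" and "\<And>x. a0 \<le> x \<Longrightarrow> x < l \<Longrightarrow> f x \<le> g x"
  shows "olimsup f l \<le> olimsup g l"
  unfolding olimsup_def
proof (rule INF_greatest)
  fix b assume "b \<in> {..<l}"
  then have b: "max a0 b < l" using assms(1) by auto
  have "(INF a0\<in>{..<l}. SUP a\<in>{a0..<l}. f a) \<le> (SUP a\<in>{max a0 b..<l}. f a)"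
    using b by (intro INF_lower) auto
  also have "\<dots> \<le> (SUP a\<in>{b..<l}. g a)"
    using assms(2) by (intro SUP_subset_mono) auto
  finally show "(INF a0\<in>{..<l}. SUP a\<in>{a0..<l}. f a) \<le> (SUP a\<in>{b..<l}. g a)" .
qed

lemma olimsup_mono:
  assumes "bot < l" and "\<And>x. x < l \<Longrightarrow> f x \<le> g x"
  shows "olimsup f l \<le> olimsup g l"
  using assms by (intro olimsup_tail_mono[of bot]) auto

lemma olimsup_const:
  assumes "bot < l"
  shows "olimsup (\<lambda>_. c) l = c"
proof -
  have "olimsup (\<lambda>_. c) l = (INF b\<in>{..<l}. c)"
    unfolding olimsup_def by (intro INF_cong refl) (subst SUP_const, auto)
  also have "\<dots> = c"
    using assms by (subst INF_const) auto
  finally show ?thesis .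
qed

lemma olimsup_Pair: "olimsup (\<lambda>a. (f a, g a)) l = (olimsup f l, olimsup g l)"
  unfolding olimsup_def by (rule prod_eqI) (simp_all add: fst_INF fst_SUP snd_INF snd_SUP)

lemma oliminf_mono:
  assumes "mono phi" and "bot < l"
  shows "oliminf phi l = Sup (phi ` {..<l})"
  unfolding oliminf_def
proof (rule SUP_cong[OF refl])
  fix b assume "b \<in> {..<l}"
  then show "(INF a\<in>{b..<l}. phi a) = phi b"
    using assms(1) by (intro antisym INF_lower INF_greatest) (auto simp: mono_def)
qed

section \<open>Successors, limits and ordinal induction\<close>

lemma le_Sup_lessThan: "(c::'o::{complete_linorder,wellorder}) < b \<Longrightarrow> c \<le> Sup {..<b}"
  by (rule Sup_upper) auto

lemma Sup_lessThan_le: "Sup {..<b} \<le> (b::'o::{complete_linorder,wellorder})"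
  by (rule Sup_least) auto

lemma less_osuc:
  fixes c :: "'o::{complete_linorder,wellorder}"
  assumes "c \<noteq> top"
  shows "c < osuc c"
proof -
  have "c < top" using assms top.not_eq_extremum by blast
  then show ?thesis using assms by (simp add: osuc_def LeastI)
qed

lemma Sup_lessThan_osuc:
  fixes c :: "'o::{complete_linorder,wellorder}"
  assumes "c \<noteq> top"
  shows "Sup {..<osuc c} = c"
proof (rule antisym)
  have "\<And>x. x < osuc c \<Longrightarrow> x \<le> c"
    using assms not_less_Least by (fastforce simp: osuc_def)
  then show "Sup {..<osuc c} \<le> c" by (intro Sup_least) auto
  show "c \<le> Sup {..<osuc c}" using less_osuc[OF assms] by (rule le_Sup_lessThan)
qed

lemma osuc_top: "osuc top = (top :: 'o::{complete_linorder,wellorder})"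
  by (simp add: osuc_def)

lemma le_osuc: "(c::'o::{complete_linorder,wellorder}) \<le> osuc c"
  by (cases "c = top") (auto simp: osuc_top dest: less_osuc)

lemma osuc_mono:
  fixes b c :: "'o::{complete_linorder,wellorder}"
  assumes "c \<le> b"
  shows "osuc c \<le> osuc b"
proof (cases "b = top")
  case False
  then have "c \<noteq> top" using assms top.extremum_unique by blast
  then show ?thesis using less_osuc[OF False] assms by (simp add: osuc_def Least_le)
qed (simp add: osuc_top)

lemma osuc_Sup_lessThan:
  fixes b :: "'o::{complete_linorder,wellorder}"
  assumes "Sup {..<b} < b"
  shows "osuc (Sup {..<b}) = b"
proof (rule antisym)
  have not_top: "Sup {..<b} \<noteq> top"
    using less_le_trans[OF assms top_greatest] by (rule less_imp_neq)
  show "osuc (Sup {..<b}) \<le> b"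
    unfolding osuc_def if_not_P[OF not_top] using assms by (rule Least_le)
  show "b \<le> osuc (Sup {..<b})"
  proof (rule ccontr)
    assume "\<not> b \<le> osuc (Sup {..<b})"
    then have "osuc (Sup {..<b}) \<le> Sup {..<b}" by (simp add: le_Sup_lessThan)
    then show False using less_osuc[OF not_top] by simp
  qed
qed

lemma nonzero_limit_iff: "nonzero_limit (b::'o::{complete_linorder,wellorder}) \<longleftrightarrow> bot < b \<and> Sup {..<b} = b"
proof
  assume lim: "nonzero_limit b"
  have "\<not> Sup {..<b} < b"
  proof
    assume "Sup {..<b} < b"
    then obtain d where "Sup {..<b} < d" "d < b" using lim unfolding nonzero_limit_def by blast
    then show False using le_Sup_lessThan[of d b] by simp
  qed
  then show "bot < b \<and> Sup {..<b} = b"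
    using lim Sup_lessThan_le unfolding nonzero_limit_def by (auto simp: order.order_iff_strict)
next
  assume "bot < b \<and> Sup {..<b} = b"
  then show "nonzero_limit b"
    unfolding nonzero_limit_def by (metis lessThan_iff less_Sup_iff)
qed

lemma nonzero_limit_bot_less: "nonzero_limit l \<Longrightarrow> bot < l"
  by (simp add: nonzero_limit_def)

lemma ordinal_induct [case_names zero succ limit]:
  fixes b :: "'o::{complete_linorder,wellorder}"
  assumes "P bot"
    and "\<And>c. c \<noteq> top \<Longrightarrow> P c \<Longrightarrow> P (osuc c)"
    and "\<And>b. nonzero_limit b \<Longrightarrow> (\<And>c. c < b \<Longrightarrow> P c) \<Longrightarrow> P b"
  shows "P b"
proof (induction b rule: less_induct)
  case (less b)
  consider "b = bot" | "Sup {..<b} < b" | "bot < b" "Sup {..<b} = b"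
    using Sup_lessThan_le[of b] bot.not_eq_extremum order.order_iff_strict by blast
  then show ?case
  proof cases
    case 2
    have "Sup {..<b} \<noteq> top" using less_le_trans[OF 2 top_greatest] by (rule less_imp_neq)
    then show ?thesis using assms(2) less.IH[OF 2] osuc_Sup_lessThan[OF 2] by metis
  qed (use assms less.IH nonzero_limit_iff in auto)
qed

lemma oiter_unfold:
  "oiter f g a = (if a = bot then g else if Sup {..<a} < a then f (oiter f g (Sup {..<a}))
     else olimsup (oiter f g) a)"
proof -
  have "adm_wf {(x, y). x < y}
     (\<lambda>rec a. if a = bot then g else if Sup {..<a} < a then f (rec (Sup {..<a})) else olimsup rec a)"
    unfolding adm_wf_def by (auto intro!: olimsup_cong)
  from fun_cong[OF wfrec_fixpoint[OF wellorder_class.wf this], of a] show ?thesis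
    unfolding oiter_def[symmetric] by simp
qed

lemma oiter_bot [simp]: "oiter f g bot = g"
  by (simp add: oiter_unfold[of _ _ bot])

lemma oiter_osuc: "c \<noteq> top \<Longrightarrow> oiter f g (osuc c) = f (oiter f g c)"
  using less_osuc Sup_lessThan_osuc by (subst oiter_unfold) fastforce

lemma oiter_limit: "nonzero_limit b \<Longrightarrow> oiter f g b = olimsup (oiter f g) b"
  by (subst oiter_unfold) (auto simp: nonzero_limit_iff)

lemma oadd_unfold:
  "oadd a b = (if b = bot then a else if Sup {..<b} < b then osuc (oadd a (Sup {..<b}))
     else Sup (oadd a ` {..<b}))"
proof -
  have "adm_wf {(x, y). x < y}
     (\<lambda>rec b. if b = bot then a else if Sup {..<b} < b then osuc (rec (Sup {..<b}))
              else Sup (rec ` {..<b}))"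
    unfolding adm_wf_def by (auto simp: image_def)
  from fun_cong[OF wfrec_fixpoint[OF wellorder_class.wf this], of b] show ?thesis
    unfolding oadd_def[symmetric] by simp
qed

lemma oadd_bot [simp]: "oadd a bot = a"
  by (simp add: oadd_unfold[of _ bot])

lemma oadd_osuc: "c \<noteq> top \<Longrightarrow> oadd a (osuc c) = osuc (oadd a c)"
  using less_osuc Sup_lessThan_osuc by (subst oadd_unfold) fastforce

lemma oadd_limit: "nonzero_limit b \<Longrightarrow> oadd a b = Sup (oadd a ` {..<b})"
  by (subst oadd_unfold) (auto simp: nonzero_limit_iff)

lemma oadd_mono_left:
  assumes "a \<le> a'"
  shows "oadd a b \<le> oadd a' b"
proof (induction b rule: ordinal_induct)
  case (limit b)
  then show ?case by (auto simp: oadd_limit intro!: SUP_subset_mono)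
qed (use assms in \<open>simp_all add: oadd_osuc osuc_mono\<close>)

section \<open>Iterating a monotone map from the top\<close>

lemma le_oiter_top:
  fixes f :: "'a::complete_lattice \<Rightarrow> 'a" and a :: "'o::{complete_linorder,wellorder}"
  assumes "mono f" and "\<And>c. c < a \<Longrightarrow> y \<le> oiter f top c"
  shows "f y \<le> oiter f top a"
  using assms(2)
proof (induction a rule: ordinal_induct)
  case (succ c)
  then have "y \<le> oiter f top c" using less_osuc by blast
  then show ?case using succ.hyps assms(1) by (simp add: oiter_osuc monoD)
next
  case (limit b)
  have "f y \<le> (INF c\<in>{..<b}. oiter f top c)"
    using limit.IH limit.prems by (intro INF_greatest) (meson lessThan_iff less_trans)
  also have "\<dots> \<le> oiter f top b"
    using limit.hyps by (simp add: oiter_limit INF_le_olimsup)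
  finally show ?case .
qed simp

lemma oiter_top_antimono:
  fixes f :: "'a::complete_lattice \<Rightarrow> 'a" and a b :: "'o::{complete_linorder,wellorder}"
  assumes "mono f" and "a \<le> b"
  shows "oiter f top b \<le> oiter f top a"
  using assms(2)
proof (induction b arbitrary: a rule: ordinal_induct)
  case (succ c)
  show ?case
  proof (cases "a = osuc c")
    case False
    then have "a \<le> c"
      using succ.prems le_Sup_lessThan[of a "osuc c"] by (simp add: Sup_lessThan_osuc succ.hyps)
    then have "\<And>d. d < a \<Longrightarrow> oiter f top c \<le> oiter f top d"
      using succ.IH by simp
    then show ?thesis using assms(1) by (simp add: oiter_osuc succ.hyps le_oiter_top)
  qed simp
next
  case (limit b)
  show ?case
  proof (cases "a = b")
    case False
    then have "a < b" using limit.prems by simp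
    then have "oiter f top b \<le> (SUP c\<in>{a..<b}. oiter f top c)"
      unfolding oiter_limit[OF limit.hyps] olimsup_def by (intro INF_lower) auto
    also have "\<dots> \<le> oiter f top a"
      using limit.IH by (intro SUP_least) auto
    finally show ?thesis .
  qed simp
qed (simp add: bot_unique)

lemma INF_oiter_top_le_oiter_top_Sup:
  fixes f :: "'a::complete_lattice \<Rightarrow> 'a" and S :: "'o::{complete_linorder,wellorder} set"
  assumes "mono f" and "S \<noteq> {}"
  shows "(INF d\<in>S. oiter f top d) \<le> oiter f top (Sup S)"
proof (cases "Sup S \<in> S")
  case False
  then have below: "\<And>d. d \<in> S \<Longrightarrow> d < Sup S"
    using Sup_upper order.order_iff_strict by metis
  have "nonzero_limit (Sup S)"
    unfolding nonzero_limit_iff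
  proof
    obtain d where "d \<in> S" using assms(2) by blast
    then show "bot < Sup S" using below le_less_trans[OF bot_least] by blast
    show "Sup {..<Sup S} = Sup S"
      using below by (intro antisym Sup_lessThan_le Sup_least Sup_upper) auto
  qed
  have "(INF d\<in>S. oiter f top d) \<le> (INF c\<in>{..<Sup S}. oiter f top c)"
  proof (rule INF_greatest)
    fix c assume "c \<in> {..<Sup S}"
    then obtain d where "d \<in> S" "c < d" using less_Sup_iff by auto
    then show "(INF d\<in>S. oiter f top d) \<le> oiter f top c"
      using oiter_top_antimono[OF assms(1), of c d] by (meson INF_lower less_imp_le order_trans)
  qed
  also have "\<dots> \<le> oiter f top (Sup S)"
    using \<open>nonzero_limit (Sup S)\<close> by (simp add: oiter_limit INF_le_olimsup)
  finally show ?thesis .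
qed (rule INF_lower)

section \<open>Pushing limits superior into greatest-fixpoint approximants\<close>

context
  fixes F :: "'o::{complete_linorder,wellorder} \<Rightarrow> 'g::complete_lattice \<Rightarrow> 'l::complete_lattice \<Rightarrow> 'l"
    and G :: "'o \<Rightarrow> 'g" and l :: 'o
  assumes F_mono: "\<And>a G. mono (F a G)"
    and push: "limsup_pushable (\<lambda>a (p :: 'g \<times> 'l). F a (fst p) (snd p))"
    and l_limit: "nonzero_limit l"
begin

lemma olimsup_F_le: "olimsup (\<lambda>a. F a (G a) (X a)) l \<le> F l (olimsup G l) (olimsup X l)"
proof -
  have "olimsup (\<lambda>a. F a (fst (G a, X a)) (snd (G a, X a))) l
      \<le> F l (fst (olimsup (\<lambda>a. (G a, X a)) l)) (snd (olimsup (\<lambda>a. (G a, X a)) l))"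
    using push[unfolded limsup_pushable_def, rule_format, of l "\<lambda>a. (G a, X a)", OF l_limit]
    by (rule conjunct2)
  then show ?thesis by (simp add: olimsup_Pair)
qed

lemma olimsup_oiter_le:
  "olimsup (\<lambda>a. oiter (F a (G a)) top b) l \<le> oiter (F l (olimsup G l)) top b"
proof (induction b rule: ordinal_induct)
  case zero
  then show ?case using olimsup_const[OF nonzero_limit_bot_less[OF l_limit]] by simp
next
  case (succ c)
  then have "olimsup (\<lambda>a. F a (G a) (oiter (F a (G a)) top c)) l
      \<le> F l (olimsup G l) (oiter (F l (olimsup G l)) top c)"
    using olimsup_F_le F_mono by (meson monoD order_trans)
  then show ?case using succ.hyps by (simp add: oiter_osuc)
next
  case (limit b)
  have "olimsup (\<lambda>a. oiter (F a (G a)) top b) l \<le> (INF c\<in>{..<b}. oiter (F l (olimsup G l)) top c)"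
  proof (rule INF_greatest)
    fix c assume "c \<in> {..<b}"
    then have "olimsup (\<lambda>a. oiter (F a (G a)) top b) l \<le> olimsup (\<lambda>a. oiter (F a (G a)) top c) l"
      by (intro olimsup_mono[OF nonzero_limit_bot_less[OF l_limit]] oiter_top_antimono F_mono) auto
    also have "\<dots> \<le> oiter (F l (olimsup G l)) top c" using limit.IH \<open>c \<in> {..<b}\<close> by simp
    finally show "olimsup (\<lambda>a. oiter (F a (G a)) top b) l \<le> oiter (F l (olimsup G l)) top c" .
  qed
  also have "\<dots> \<le> oiter (F l (olimsup G l)) top b"
    using INF_oiter_top_le_oiter_top_Sup[OF F_mono, of "{..<b}"] limit.hyps
    by (auto simp: nonzero_limit_iff)
  finally show ?case .
qed

lemma olimsup_oiter_mono_le: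
  assumes "mono psi"
  shows "olimsup (\<lambda>a. oiter (F a (G a)) top (psi a)) l
    \<le> oiter (F l (olimsup G l)) top (Sup (psi ` {..<l}))"
proof -
  have "olimsup (\<lambda>a. oiter (F a (G a)) top (psi a)) l
      \<le> (INF d\<in>psi ` {..<l}. oiter (F l (olimsup G l)) top d)"
  proof (rule INF_greatest)
    fix d assume "d \<in> psi ` {..<l}"
    then obtain a0 where "a0 < l" "d = psi a0" by auto
    then have "olimsup (\<lambda>a. oiter (F a (G a)) top (psi a)) l \<le> olimsup (\<lambda>a. oiter (F a (G a)) top d) l"
      using assms by (intro olimsup_tail_mono[of a0] oiter_top_antimono F_mono) (auto simp: mono_def)
    also have "\<dots> \<le> oiter (F l (olimsup G l)) top d" by (rule olimsup_oiter_le)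
    finally show "olimsup (\<lambda>a. oiter (F a (G a)) top (psi a)) l \<le> oiter (F l (olimsup G l)) top d" .
  qed
  also have "\<dots> \<le> oiter (F l (olimsup G l)) top (Sup (psi ` {..<l}))"
    using nonzero_limit_bot_less[OF l_limit] by (intro INF_oiter_top_le_oiter_top_Sup F_mono) auto
  finally show ?thesis .
qed

lemma olimsup_oiter_oadd_le:
  "olimsup (\<lambda>a. oiter (F a (G a)) top (oadd a b)) l \<le> oiter (F l (olimsup G l)) top (oadd l b)"
proof (induction b rule: ordinal_induct)
  case zero
  show ?case
    using olimsup_oiter_mono_le[of "\<lambda>a. a"] l_limit by (simp add: mono_def nonzero_limit_iff)
next
  case (succ c)
  show ?case
  proof (cases "oadd l c = top")
    case True
    have "olimsup (\<lambda>a. oiter (F a (G a)) top (oadd a (osuc c))) l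
        \<le> olimsup (\<lambda>a. oiter (F a (G a)) top (oadd a c)) l"
      using succ.hyps
      by (intro olimsup_mono[OF nonzero_limit_bot_less[OF l_limit]] oiter_top_antimono F_mono)
         (simp add: oadd_osuc le_osuc)
    then show ?thesis using succ.IH True by (simp add: oadd_osuc succ.hyps osuc_top)
  next
    case False
    have "oadd a c \<noteq> top" if "a < l" for a
      using False oadd_mono_left[of a l c] that by (metis less_imp_le top_unique)
    then have "olimsup (\<lambda>a. oiter (F a (G a)) top (oadd a (osuc c))) l
        = olimsup (\<lambda>a. F a (G a) (oiter (F a (G a)) top (oadd a c))) l"
      by (intro olimsup_cong) (simp add: oadd_osuc succ.hyps oiter_osuc)
    also have "\<dots> \<le> F l (olimsup G l) (oiter (F l (olimsup G l)) top (oadd l c))"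
      using olimsup_F_le F_mono succ.IH by (meson monoD order_trans)
    finally show ?thesis using False by (simp add: oadd_osuc succ.hyps oiter_osuc)
  qed
next
  case (limit b)
  have "olimsup (\<lambda>a. oiter (F a (G a)) top (oadd a b)) l
      \<le> (INF d\<in>oadd l ` {..<b}. oiter (F l (olimsup G l)) top d)"
  proof (rule INF_greatest)
    fix d assume "d \<in> oadd l ` {..<b}"
    then obtain c where "c < b" "d = oadd l c" by auto
    then have "olimsup (\<lambda>a. oiter (F a (G a)) top (oadd a b)) l
        \<le> olimsup (\<lambda>a. oiter (F a (G a)) top (oadd a c)) l"
      using limit.hyps
      by (intro olimsup_mono[OF nonzero_limit_bot_less[OF l_limit]] oiter_top_antimono F_mono)
         (auto simp: oadd_limit intro: SUP_upper)
    also have "\<dots> \<le> oiter (F l (olimsup G l)) top d" using limit.IH \<open>c < b\<close> \<open>d = oadd l c\<close> by simp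
    finally show "olimsup (\<lambda>a. oiter (F a (G a)) top (oadd a b)) l \<le> oiter (F l (olimsup G l)) top d" .
  qed
  also have "\<dots> \<le> oiter (F l (olimsup G l)) top (oadd l b)"
    using limit.hyps oadd_limit[OF limit.hyps]
    by (auto simp: nonzero_limit_iff intro!: INF_oiter_top_le_oiter_top_Sup F_mono)
  finally show ?case .
qed

end

theorem theorem4p15:
  fixes F :: "'o::{complete_linorder,wellorder} \<Rightarrow> 'g::complete_lattice \<Rightarrow> 'l::complete_lattice \<Rightarrow> 'l"
    and phi :: "'o \<Rightarrow> 'o"
  assumes F_mono: "\<And>a G. mono (F a G)"
    and push: "limsup_pushable (\<lambda>a (p :: 'g \<times> 'l). F a (fst p) (snd p))"
    and phi_mono: "mono phi"
  shows "\<forall>l (G :: 'o \<Rightarrow> 'g). nonzero_limit l \<longrightarrow>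
           olimsup (\<lambda>a. onu (phi a) (F a (G a))) l \<le> onu (oliminf phi l) (F l (olimsup G l))
         \<and> (affine phi \<longrightarrow>
              olimsup (\<lambda>a. onu (phi a) (F a (G a))) l \<le> onu (phi l) (F l (olimsup G l)))"
proof (intro allI impI conjI)
  fix l :: 'o and G :: "'o \<Rightarrow> 'g"
  assume l: "nonzero_limit l"
  note bot_less_l = nonzero_limit_bot_less[OF l]
  show liminf_bound: "olimsup (\<lambda>a. onu (phi a) (F a (G a))) l \<le> onu (oliminf phi l) (F l (olimsup G l))"
    unfolding onu_def oliminf_mono[OF phi_mono bot_less_l]
    by (rule olimsup_oiter_mono_le[OF F_mono push l phi_mono])
  assume "affine phi"
  then obtain b :: nat and beta where phi: "phi = (\<lambda>a. if b = 0 then beta else oadd a beta)"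
    unfolding affine_def by blast
  show "olimsup (\<lambda>a. onu (phi a) (F a (G a))) l \<le> onu (phi l) (F l (olimsup G l))"
  proof (cases "b = 0")
    case True
    have "oliminf phi l = Sup (phi ` {..<l})"
      by (rule oliminf_mono[OF phi_mono bot_less_l])
    also have "\<dots> = phi l"
      using True bot_less_l by (simp add: phi) (subst SUP_const, auto)
    finally have "oliminf phi l = phi l" .
    then show ?thesis using liminf_bound by simp
  next
    case False
    then show ?thesis
      unfolding phi onu_def using olimsup_oiter_oadd_le[OF F_mono push l] by simp
  qed
qed

end
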